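(* Every finite connected graph that is both geodetic and ptolemaic is diagonal.
   Context: $d$ denotes shortest-path distance. A graph is geodetic if between any two vertices there is exactly one shortest path. It is ptolemaic if $d(x,y)d(z,w)+d(y,z)d(x,w)\ge d(x,z)d(y,w)$ for all vertices $x,y,z,w$. For vertices $x_0,\dots,x_k$ put $\ell(x_0,\dots,x_k)=\sum_{i=0}^{k-1}d(x_i,x_{i+1})$. The magnitude chain complex: $\mathrm{MC}_{k,l}(G)$ is the free abelian group on $I_{k,l}(G)=\{(x_0,\dots,x_k)\in V(G)^{k+1}: x_i\neq x_{i+1}\ \forall i,\ \ell=l\}$, with differential $\partial=\sum_{i=1}^{k-1}(-1)^i\partial_i$, where $\partial_i$ deletes $x_i$ if this does not change $\ell$ and is $0$ otherwise. Magnitude homology: $\mathrm{MH}_{k,l}(G)=H_k(\mathrm{MC}_{*,l}(G))$. $G$ is diagonal if $\mathrm{MH}_{k,l}(G)=0$ whenever $k\ne l$. *)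

theory Defs
  imports Main
begin

definition simple_graph :: "'a set \<Rightarrow> ('a \<Rightarrow> 'a \<Rightarrow> bool) \<Rightarrow> bool" where
  "simple_graph V E \<longleftrightarrow> (\<forall>x y. E x y \<longrightarrow> x \<in> V \<and> y \<in> V \<and> x \<noteq> y \<and> E y x)"

text \<open>A walk is a nonempty vertex list whose consecutive entries are adjacent;
its length (number of edges) is length p - 1.\<close>

definition walk :: "'a set \<Rightarrow> ('a \<Rightarrow> 'a \<Rightarrow> bool) \<Rightarrow> 'a list \<Rightarrow> bool" where
  "walk V E p \<longleftrightarrow> p \<noteq> [] \<and> set p \<subseteq> V \<and> (\<forall>i. Suc i < length p \<longrightarrow> E (p ! i) (p ! Suc i))"

definition connected_graph :: "'a set \<Rightarrow> ('a \<Rightarrow> 'a \<Rightarrow> bool) \<Rightarrow> bool" where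
  "connected_graph V E \<longleftrightarrow> (\<forall>x\<in>V. \<forall>y\<in>V. \<exists>p. walk V E p \<and> hd p = x \<and> last p = y)"

definition gdist :: "'a set \<Rightarrow> ('a \<Rightarrow> 'a \<Rightarrow> bool) \<Rightarrow> 'a \<Rightarrow> 'a \<Rightarrow> nat" where
  "gdist V E x y = (LEAST n. \<exists>p. walk V E p \<and> hd p = x \<and> last p = y \<and> length p = Suc n)"

definition shortest_path :: "'a set \<Rightarrow> ('a \<Rightarrow> 'a \<Rightarrow> bool) \<Rightarrow> 'a \<Rightarrow> 'a \<Rightarrow> 'a list \<Rightarrow> bool" where
  "shortest_path V E x y p \<longleftrightarrow>
     walk V E p \<and> hd p = x \<and> last p = y \<and> length p = Suc (gdist V E x y)"

definition geodetic :: "'a set \<Rightarrow> ('a \<Rightarrow> 'a \<Rightarrow> bool) \<Rightarrow> bool" where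
  "geodetic V E \<longleftrightarrow> (\<forall>x\<in>V. \<forall>y\<in>V. \<exists>!p. shortest_path V E x y p)"

definition ptolemaic :: "'a set \<Rightarrow> ('a \<Rightarrow> 'a \<Rightarrow> bool) \<Rightarrow> bool" where
  "ptolemaic V E \<longleftrightarrow> (\<forall>x\<in>V. \<forall>y\<in>V. \<forall>z\<in>V. \<forall>w\<in>V.
      gdist V E x y * gdist V E z w + gdist V E y z * gdist V E x w
        \<ge> gdist V E x z * gdist V E y w)"

text \<open>Length of a tuple (x_0,...,x_k), represented as a list of length k+1.\<close>

definition tlen :: "'a set \<Rightarrow> ('a \<Rightarrow> 'a \<Rightarrow> bool) \<Rightarrow> 'a list \<Rightarrow> nat" where
  "tlen V E t = (\<Sum>i<length t - 1. gdist V E (t ! i) (t ! Suc i))"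

definition gens :: "'a set \<Rightarrow> ('a \<Rightarrow> 'a \<Rightarrow> bool) \<Rightarrow> nat \<Rightarrow> nat \<Rightarrow> 'a list set" where
  "gens V E k l = {t. length t = Suc k \<and> set t \<subseteq> V \<and>
       (\<forall>i. Suc i < length t \<longrightarrow> t ! i \<noteq> t ! Suc i) \<and> tlen V E t = l}"

text \<open>Elements of the free abelian group MC_{k,l}(G) on gens k l: integer-valued
functions supported in gens k l (finite, since V is finite).\<close>

definition mchain :: "'a set \<Rightarrow> ('a \<Rightarrow> 'a \<Rightarrow> bool) \<Rightarrow> nat \<Rightarrow> nat \<Rightarrow> ('a list \<Rightarrow> int) \<Rightarrow> bool" where
  "mchain V E k l c \<longleftrightarrow> (\<forall>t. c t \<noteq> 0 \<longrightarrow> t \<in> gens V E k l)"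

definition del_at :: "nat \<Rightarrow> 'a list \<Rightarrow> 'a list" where
  "del_at i t = take i t @ drop (Suc i) t"

definition mbdry :: "'a set \<Rightarrow> ('a \<Rightarrow> 'a \<Rightarrow> bool) \<Rightarrow> nat \<Rightarrow> nat \<Rightarrow> ('a list \<Rightarrow> int) \<Rightarrow> 'a list \<Rightarrow> int" where
  "mbdry V E k l c s = (\<Sum>t\<in>gens V E k l. c t *
       (\<Sum>i\<in>{1..<k}. (-1) ^ i *
          (if del_at i t = s \<and> tlen V E (del_at i t) = tlen V E t then 1 else 0)))"

definition MH_zero :: "'a set \<Rightarrow> ('a \<Rightarrow> 'a \<Rightarrow> bool) \<Rightarrow> nat \<Rightarrow> nat \<Rightarrow> bool" where
  "MH_zero V E k l \<longleftrightarrow>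
     (\<forall>c. mchain V E k l c \<and> mbdry V E k l c = (\<lambda>_. 0) \<longrightarrow>
        (\<exists>b. mchain V E (Suc k) l b \<and> mbdry V E (Suc k) l b = c))"

definition diagonal :: "'a set \<Rightarrow> ('a \<Rightarrow> 'a \<Rightarrow> bool) \<Rightarrow> bool" where
  "diagonal V E \<longleftrightarrow> (\<forall>k l. k \<noteq> l \<longrightarrow> MH_zero V E k l)"

end

theory Submission
  imports Defs
begin

text \<open>
  For k \<noteq> l we contract MC_{*,l} in degree k by an explicit chain homotopy H, i.e.
  \<partial>H + H\<partial> = id on MC_{k,l}. Call j \<ge> 1 a pivot of a tuple (x_0, ..., x_k) if
  d(x_{j-1}, x_j) \<ge> 2 or x_j lies on a geodesic from x_{j-1} to x_{j+1} (so that deleting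
  x_j preserves the length). A tuple without pivots has all steps of length 1, hence length k;
  so for k \<noteq> l every generator has a first pivot j. If that pivot is a long step, H inserts
  at position j, with sign (-1)^j, the neighbour of x_{j-1} on the unique geodesic to x_j;
  otherwise H vanishes.

  The Ptolemy inequality for four points p, q, r, s with q between p and r and r between
  q and s (q \<noteq> r) forces d(p,s) = d(p,q) + d(q,r) + d(r,s). This is what makes inserting or
  deleting a vertex at or after the first pivot create no earlier pivot and preserve its kind,
  so that in \<partial>H t + H\<partial> t all terms except t cancel in pairs.
\<close>

definition ins_at :: "nat \<Rightarrow> 'a \<Rightarrow> 'a list \<Rightarrow> 'a list" where
  "ins_at i y t = take i t @ y # drop i t"

lemma length_del_at [simp]: "i < length t \<Longrightarrow> length (del_at i t) = length t - 1"
  by (simp add: del_at_def)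

lemma nth_del_at:
  "i < length t \<Longrightarrow> j < length t - 1 \<Longrightarrow> del_at i t ! j = (if j < i then t ! j else t ! Suc j)"
  by (auto simp: del_at_def nth_append min_def)

lemma set_del_at_subset: "set (del_at i t) \<subseteq> set t"
  unfolding del_at_def using set_take_subset set_drop_subset by fastforce

lemma length_ins_at [simp]: "i \<le> length t \<Longrightarrow> length (ins_at i y t) = Suc (length t)"
  by (simp add: ins_at_def)

lemma nth_ins_at:
  assumes "i \<le> length t" "j \<le> length t"
  shows "ins_at i y t ! j = (if j < i then t ! j else if j = i then y else t ! (j - 1))"
proof -
  consider "j \<le> i" | m where "j = Suc (i + m)"
    by (metis less_iff_Suc_add not_le)
  then show ?thesis
    by cases (use assms in \<open>auto simp: ins_at_def nth_append min_def\<close>)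
qed

lemma set_ins_at_subset: "set (ins_at i y t) \<subseteq> insert y (set t)"
  unfolding ins_at_def using set_take_subset set_drop_subset by fastforce

lemma del_at_ins_at [simp]: "i \<le> length t \<Longrightarrow> del_at i (ins_at i y t) = t"
  by (simp add: del_at_def ins_at_def)

lemma ins_at_nth_del_at: "i < length t \<Longrightarrow> ins_at i (t ! i) (del_at i t) = t"
  by (simp add: del_at_def ins_at_def min_def Cons_nth_drop_Suc)

lemma del_at_Suc_ins_at:
  assumes "i0 \<le> i" "i < length t"
  shows "del_at (Suc i) (ins_at i0 y t) = ins_at i0 y (del_at i t)"
proof (rule nth_equalityI)
  show "length (del_at (Suc i) (ins_at i0 y t)) = length (ins_at i0 y (del_at i t))"
    using assms by simp
  fix j assume "j < length (del_at (Suc i) (ins_at i0 y t))"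
  then show "del_at (Suc i) (ins_at i0 y t) ! j = ins_at i0 y (del_at i t) ! j"
    using assms by (auto simp: nth_del_at nth_ins_at)
qed

lemma tlen_Cons_Cons: "tlen V E (x # y # zs) = gdist V E x y + tlen V E (y # zs)"
  unfolding tlen_def by (simp add: sum.lessThan_Suc_shift del: sum.lessThan_Suc)

lemma tlen_singleton [simp]: "tlen V E [x] = 0"
  by (simp add: tlen_def)

lemma tlen_append: "tlen V E (xs @ y # ys) = tlen V E (xs @ [y]) + tlen V E (y # ys)"
  by (induction xs rule: induct_list012) (auto simp: tlen_Cons_Cons)

lemma tlen_del_at:
  assumes "1 \<le> i" "Suc i < length t"
  shows "tlen V E (del_at i t) + gdist V E (t ! (i - 1)) (t ! i) + gdist V E (t ! i) (t ! Suc i)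
       = tlen V E t + gdist V E (t ! (i - 1)) (t ! Suc i)"
proof -
  define xs ys a b c where "xs = take (i - 1) t" and "ys = drop (Suc (Suc i)) t"
    and "a = t ! (i - 1)" and "b = t ! i" and "c = t ! Suc i"
  have take_i: "take i t = xs @ [a]"
    using assms take_Suc_conv_app_nth[of "i - 1" t] unfolding xs_def a_def by simp
  have drop_i: "drop i t = b # c # ys"
    using assms unfolding ys_def b_def c_def by (simp add: Cons_nth_drop_Suc)
  have "t = xs @ a # b # c # ys"
    using take_i drop_i append_take_drop_id[of i t] by simp
  \<comment> \<open>tlen_append loops as a rewrite rule (xs @ [y] matches its left-hand side)\<close>
  then have "tlen V E t = tlen V E (xs @ [a]) + (gdist V E a b + (gdist V E b c + tlen V E (c # ys)))"
    by (simp add: tlen_append[of V E xs a "b # c # ys"] tlen_Cons_Cons)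
  moreover have "tlen V E (del_at i t) = tlen V E (xs @ [a]) + (gdist V E a c + tlen V E (c # ys))"
    using take_i drop_i unfolding del_at_def
    by (simp add: drop_Suc drop_tl tlen_append[of V E xs a "c # ys"] tlen_Cons_Cons)
  ultimately show ?thesis
    unfolding a_def[symmetric] b_def[symmetric] c_def[symmetric] by simp
qed

lemma sum_shift_cancel:
  fixes f g :: "nat \<Rightarrow> 'b::comm_ring_1"
  assumes i0: "1 \<le> i0" "i0 \<le> k"
    and before: "\<And>m. 1 \<le> m \<Longrightarrow> m < i0 \<Longrightarrow> f m = 0 \<and> g m = 0"
    and cancel: "\<And>i. i0 \<le> i \<Longrightarrow> i < k \<Longrightarrow> c * f (Suc i) + g i = 0"
  shows "c * (\<Sum>m\<in>{1..<Suc k}. f m) + (\<Sum>i\<in>{1..<k}. g i) = c * f i0"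
proof -
  have "(\<Sum>m\<in>{1..<Suc k}. f m) = (\<Sum>m\<in>{1..<i0}. f m) + (\<Sum>m\<in>{i0..<Suc k}. f m)"
    using sum.atLeastLessThan_concat[of 1 i0 "Suc k" f] i0 by simp
  also have "(\<Sum>m\<in>{i0..<Suc k}. f m) = f i0 + (\<Sum>m\<in>{Suc i0..<Suc k}. f m)"
    using sum.atLeast_Suc_lessThan[of i0 "Suc k" f] i0 by simp
  also have "(\<Sum>m\<in>{Suc i0..<Suc k}. f m) = (\<Sum>i\<in>{i0..<k}. f (Suc i))"
    by (rule sum.shift_bounds_Suc_ivl)
  also have "(\<Sum>m\<in>{1..<i0}. f m) = 0"
    using before by simp
  finally have f_sum: "(\<Sum>m\<in>{1..<Suc k}. f m) = f i0 + (\<Sum>i\<in>{i0..<k}. f (Suc i))"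
    by simp
  have "(\<Sum>i\<in>{1..<k}. g i) = (\<Sum>i\<in>{1..<i0}. g i) + (\<Sum>i\<in>{i0..<k}. g i)"
    using sum.atLeastLessThan_concat[of 1 i0 k g] i0 by (cases "i0 = k") simp_all
  then have g_sum: "(\<Sum>i\<in>{1..<k}. g i) = (\<Sum>i\<in>{i0..<k}. g i)"
    using before by simp
  show ?thesis
    unfolding f_sum g_sum using cancel
    by (simp add: algebra_simps sum.distrib[symmetric] sum_distrib_left)
qed

section \<open>Graph distance\<close>

lemma walk_singleton [simp]: "walk V E [x] \<longleftrightarrow> x \<in> V"
  by (auto simp: walk_def)

lemma walk_Cons_Cons [simp]: "walk V E (x # y # p) \<longleftrightarrow> x \<in> V \<and> E x y \<and> walk V E (y # p)"
proof
  assume "walk V E (x # y # p)"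
  then show "x \<in> V \<and> E x y \<and> walk V E (y # p)"
    unfolding walk_def by (auto dest: spec[where x="Suc _"] spec[where x=0])
next
  assume "x \<in> V \<and> E x y \<and> walk V E (y # p)"
  then show "walk V E (x # y # p)"
    unfolding walk_def by (auto simp: nth_Cons split: nat.split)
qed

lemma walk_append_tl:
  "walk V E p \<Longrightarrow> walk V E q \<Longrightarrow> last p = hd q \<Longrightarrow> walk V E (p @ tl q)"
proof (induction p rule: induct_list012)
  case 1
  then show ?case by (simp add: walk_def)
next
  case (2 x)
  then show ?case by (cases q) auto
next
  case (3 x y zs)
  then show ?case by auto
qed

locale connected_simple_graph =
  fixes V :: "'a set" and E :: "'a \<Rightarrow> 'a \<Rightarrow> bool"
  assumes simple: "simple_graph V E" and connected: "connected_graph V E"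
begin

abbreviation d where "d \<equiv> gdist V E"

lemma shortest_walk_exists:
  assumes "x \<in> V" "y \<in> V"
  shows "\<exists>p. walk V E p \<and> hd p = x \<and> last p = y \<and> length p = Suc (d x y)"
proof -
  obtain p where p: "walk V E p" "hd p = x" "last p = y"
    using connected assms unfolding connected_graph_def by blast
  then have "\<exists>n p. walk V E p \<and> hd p = x \<and> last p = y \<and> length p = Suc n"
    by (intro exI[of _ "length p - 1"] exI[of _ p]) (auto simp: walk_def)
  then show ?thesis
    unfolding gdist_def by (rule LeastI_ex)
qed

lemma gdist_le_walk: "walk V E p \<Longrightarrow> hd p = x \<Longrightarrow> last p = y \<Longrightarrow> d x y \<le> length p - 1"
  unfolding gdist_def by (rule Least_le) (auto simp: walk_def)

lemma gdist_self [simp]: "x \<in> V \<Longrightarrow> d x x = 0"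
  using gdist_le_walk[of "[x]" x x] by simp

lemma gdist_eq_0_iff: "x \<in> V \<Longrightarrow> y \<in> V \<Longrightarrow> d x y = 0 \<longleftrightarrow> x = y"
  using shortest_walk_exists[of x y] by (auto simp: length_Suc_conv)

lemma gdist_triangle:
  assumes "x \<in> V" "y \<in> V" "z \<in> V"
  shows "d x z \<le> d x y + d y z"
proof -
  obtain p where p: "walk V E p" "hd p = x" "last p = y" "length p = Suc (d x y)"
    using shortest_walk_exists assms by blast
  obtain q where q: "walk V E q" "hd q = y" "last q = z" "length q = Suc (d y z)"
    using shortest_walk_exists assms by blast
  have "d x z \<le> length (p @ tl q) - 1"
  proof (rule gdist_le_walk)
    show "walk V E (p @ tl q)" using p q by (intro walk_append_tl) auto
    show "hd (p @ tl q) = x" "last (p @ tl q) = z"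
      using p q by (cases p; cases q; auto simp: last_append)+
  qed
  with p q show ?thesis by simp
qed

lemma gdist_eq_1_iff: "d x y = 1 \<and> x \<in> V \<and> y \<in> V \<longleftrightarrow> E x y"
proof
  assume xy: "d x y = 1 \<and> x \<in> V \<and> y \<in> V"
  then obtain p where "walk V E p" "hd p = x" "last p = y" "length p = 2"
    using shortest_walk_exists by fastforce
  then show "E x y" by (auto simp: length_Suc_conv numeral_2_eq_2)
next
  assume "E x y"
  then have xy: "x \<in> V" "y \<in> V" "x \<noteq> y"
    using simple unfolding simple_graph_def by auto
  moreover have "d x y \<le> 1"
    using gdist_le_walk[of "[x, y]" x y] \<open>E x y\<close> xy by simp
  ultimately show "d x y = 1 \<and> x \<in> V \<and> y \<in> V"
    using gdist_eq_0_iff[of x y] by simp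
qed

definition between :: "'a \<Rightarrow> 'a \<Rightarrow> 'a \<Rightarrow> bool" where
  "between x y z \<longleftrightarrow> d x y + d y z = d x z"

lemma between_distinct: "x \<in> V \<Longrightarrow> y \<in> V \<Longrightarrow> x \<noteq> y \<Longrightarrow> between x y z \<Longrightarrow> x \<noteq> z"
  unfolding between_def using gdist_eq_0_iff by fastforce

lemma between_shrink_right:
  assumes "p \<in> V" "q \<in> V" "r \<in> V" "s \<in> V" "between p q s" "between q r s"
  shows "between p q r"
  using assms gdist_triangle[of p q r] gdist_triangle[of p r s] unfolding between_def by linarith

end

section \<open>Geodesics in geodetic and ptolemaic graphs\<close>

locale geodetic_graph = connected_simple_graph +
  assumes geodetic: "geodetic V E"
begin

text \<open>The neighbour of a on the unique geodesic from a to b (unspecified for a = b).\<close>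

definition next_hop :: "'a \<Rightarrow> 'a \<Rightarrow> 'a" where
  "next_hop a b = (THE y. y \<in> V \<and> d a y = 1 \<and> d y b + 1 = d a b)"

lemma next_hop_unique:
  assumes "a \<in> V" "b \<in> V"
    and y: "y \<in> V" "d a y = 1" "d y b + 1 = d a b"
    and y': "y' \<in> V" "d a y' = 1" "d y' b + 1 = d a b"
  shows "y = y'"
proof -
  have shortest: "shortest_path V E a b (a # q)"
    if q: "walk V E q" "hd q = z" "last q = b" "length q = Suc (d z b)"
      and z: "z \<in> V" "d a z = 1" "d z b + 1 = d a b" for q z
  proof -
    obtain r where "q = z # r" using q by (cases q) (auto simp: walk_def)
    moreover have "E a z" using z \<open>a \<in> V\<close> gdist_eq_1_iff by blast
    ultimately show ?thesis
      unfolding shortest_path_def using q z \<open>a \<in> V\<close> by auto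
  qed
  obtain q where q: "walk V E q" "hd q = y" "last q = b" "length q = Suc (d y b)"
    using shortest_walk_exists assms by blast
  obtain q' where q': "walk V E q'" "hd q' = y'" "last q' = b" "length q' = Suc (d y' b)"
    using shortest_walk_exists assms by blast
  have "a # q = a # q'"
    using geodetic assms shortest[OF q y] shortest[OF q' y'] unfolding geodetic_def by blast
  with q q' show ?thesis by simp
qed

lemma next_hop_exists:
  assumes "a \<in> V" "b \<in> V" "a \<noteq> b"
  shows "\<exists>y. y \<in> V \<and> d a y = 1 \<and> d y b + 1 = d a b"
proof -
  obtain p where p: "walk V E p" "hd p = a" "last p = b" "length p = Suc (d a b)"
    using shortest_walk_exists assms by blast
  moreover have "d a b \<noteq> 0" using gdist_eq_0_iff assms by blast
  ultimately obtain y r where p_eq: "p = a # y # r"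
    by (cases p; cases "tl p") auto
  then have "E a y" "walk V E (y # r)" using p by auto
  then have y: "y \<in> V" "d a y = 1" using gdist_eq_1_iff by blast+
  have "d y b \<le> length (y # r) - 1"
    using p p_eq \<open>walk V E (y # r)\<close> by (intro gdist_le_walk) auto
  moreover have "d a b \<le> d a y + d y b" using gdist_triangle assms y by blast
  ultimately show ?thesis using y p p_eq by (intro exI[of _ y]) auto
qed

lemma next_hop_eqI:
  assumes "a \<in> V" "b \<in> V" "y \<in> V" "d a y = 1" "d y b + 1 = d a b"
  shows "next_hop a b = y"
  unfolding next_hop_def using assms next_hop_unique[OF assms(1,2)] by blast

lemma next_hop:
  assumes "a \<in> V" "b \<in> V" "a \<noteq> b"
  shows "next_hop a b \<in> V" "d a (next_hop a b) = 1" "d (next_hop a b) b + 1 = d a b"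
  using next_hop_exists[OF assms] next_hop_eqI[OF assms(1,2)] by metis+

lemma next_hop_inner:
  assumes "a \<in> V" "b \<in> V" "2 \<le> d a b"
  shows "next_hop a b \<in> V" "d a (next_hop a b) = 1" "next_hop a b \<noteq> a" "next_hop a b \<noteq> b"
    "between a (next_hop a b) b"
proof -
  have "a \<noteq> b" using assms by auto
  then show "next_hop a b \<in> V" "d a (next_hop a b) = 1" "next_hop a b \<noteq> a"
    "next_hop a b \<noteq> b" "between a (next_hop a b) b"
    using next_hop[of a b] assms unfolding between_def by auto
qed

lemma next_hop_between_extend:
  assumes "a \<in> V" "b \<in> V" "c \<in> V" "a \<noteq> b" "between a b c"
  shows "next_hop a c = next_hop a b"
proof -
  let ?y = "next_hop a b"
  have y: "?y \<in> V" "d a ?y = 1" "d ?y b + 1 = d a b" using next_hop assms by blast+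
  have "d ?y c \<le> d ?y b + d b c" "d a c \<le> d a ?y + d ?y c"
    using gdist_triangle y assms by blast+
  then have "d ?y c + 1 = d a c" using y assms(5) unfolding between_def by linarith
  then show ?thesis using next_hop_eqI assms y by blast
qed

end

locale ptolemaic_graph = connected_simple_graph +
  assumes ptolemaic: "ptolemaic V E"
begin

lemma between_concat:
  assumes "p \<in> V" "q \<in> V" "r \<in> V" "s \<in> V"
    and "between p q r" "between q r s" "q \<noteq> r"
  shows "d p s = d p q + d q r + d r s"
proof -
  have "d p q * d r s + d q r * d p s \<ge> (d p q + d q r) * (d q r + d r s)"
    using ptolemaic assms unfolding ptolemaic_def between_def by metis
  then have "d q r * d p s \<ge> d q r * (d p q + d q r + d r s)"
    by (simp add: algebra_simps)
  moreover have "d q r > 0" using gdist_eq_0_iff assms by auto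
  ultimately have "d p s \<ge> d p q + d q r + d r s" by simp
  moreover have "d p s \<le> d p q + d q r + d r s"
    using gdist_triangle[of p r s] assms unfolding between_def by simp
  ultimately show ?thesis by simp
qed

end

locale geodetic_ptolemaic_graph = geodetic_graph + ptolemaic_graph +
  assumes finite_vertices: "finite V"
begin

lemma between_next_hop_iff:
  assumes "a \<in> V" "b \<in> V" "c \<in> V" "2 \<le> d a b"
  shows "between (next_hop a b) b c \<longleftrightarrow> between a b c"
proof -
  let ?y = "next_hop a b"
  note y = next_hop_inner[OF assms(1,2,4)]
  show ?thesis
  proof
    assume "between ?y b c"
    from between_concat[OF assms(1) y(1) assms(2,3) y(5) this y(4)] y(5)
    show "between a b c" unfolding between_def by simp
  next
    assume abc: "between a b c"
    have "d ?y c \<le> d ?y b + d b c" "d a c \<le> d a ?y + d ?y c"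
      using gdist_triangle y assms by blast+
    then show "between ?y b c" using abc y(5) unfolding between_def by linarith
  qed
qed

lemma between_next_hop_left:
  assumes "p \<in> V" "a \<in> V" "b \<in> V" "2 \<le> d a b" "between p a (next_hop a b)"
  shows "between p a b"
proof -
  note y = next_hop_inner[OF assms(2,3,4)]
  from between_concat[OF assms(1,2) y(1) assms(3,5) y(5)] y(3) y(5)
  show ?thesis unfolding between_def by simp
qed

definition proper_tuple :: "'a list \<Rightarrow> bool" where
  "proper_tuple t \<longleftrightarrow> set t \<subseteq> V \<and> (\<forall>i. Suc i < length t \<longrightarrow> t ! i \<noteq> t ! Suc i)"

lemma gens_iff: "t \<in> gens V E k l \<longleftrightarrow> length t = Suc k \<and> proper_tuple t \<and> tlen V E t = l"
  by (auto simp: gens_def proper_tuple_def)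

lemma proper_tuple_nth: "proper_tuple t \<Longrightarrow> i < length t \<Longrightarrow> t ! i \<in> V"
  unfolding proper_tuple_def by (auto dest: nth_mem)

lemma proper_tuple_nth_Suc: "proper_tuple t \<Longrightarrow> Suc i < length t \<Longrightarrow> t ! i \<noteq> t ! Suc i"
  unfolding proper_tuple_def by auto

lemma finite_gens: "finite (gens V E k l)"
proof (rule finite_subset)
  show "gens V E k l \<subseteq> {t. set t \<subseteq> V \<and> length t = Suc k}" by (auto simp: gens_def)
  show "finite {t. set t \<subseteq> V \<and> length t = Suc k}"
    using finite_lists_length_eq[OF finite_vertices] by simp
qed

definition deletable :: "nat \<Rightarrow> 'a list \<Rightarrow> bool" where
  "deletable i t \<longleftrightarrow> tlen V E (del_at i t) = tlen V E t"

lemma deletable_iff_between: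
  "1 \<le> i \<Longrightarrow> Suc i < length t \<Longrightarrow> deletable i t \<longleftrightarrow> between (t ! (i - 1)) (t ! i) (t ! Suc i)"
  using tlen_del_at[of i t V E] unfolding deletable_def between_def by linarith

lemma proper_tuple_del_at:
  assumes pr: "proper_tuple t" and i: "1 \<le> i" "Suc i < length t"
    and ne: "t ! (i - 1) \<noteq> t ! Suc i"
  shows "proper_tuple (del_at i t)"
proof -
  have "del_at i t ! j \<noteq> del_at i t ! Suc j" if j: "Suc j < length (del_at i t)" for j
  proof -
    consider "Suc j < i" | "Suc j = i" | "i \<le> j" by linarith
    then show ?thesis
    proof cases
      case 1
      then show ?thesis using i j proper_tuple_nth_Suc[OF pr, of j] by (simp add: nth_del_at)
    next
      case 2
      then have "j = i - 1" by simp
      then show ?thesis using i j ne by (simp add: nth_del_at)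
    next
      case 3
      then show ?thesis using i j proper_tuple_nth_Suc[OF pr, of "Suc j"] by (simp add: nth_del_at)
    qed
  qed
  then show ?thesis
    using pr set_del_at_subset[of i t] unfolding proper_tuple_def by blast
qed

lemma del_at_gens:
  assumes t: "t \<in> gens V E k l" and i: "1 \<le> i" "i < k" and del: "deletable i t"
  shows "del_at i t \<in> gens V E (k - 1) l"
proof -
  have len: "length t = Suc k" and pr: "proper_tuple t" using t gens_iff by auto
  have "between (t ! (i - 1)) (t ! i) (t ! Suc i)" using deletable_iff_between[of i t] i len del by simp
  moreover have "t ! (i - 1) \<in> V" "t ! i \<in> V" "t ! (i - 1) \<noteq> t ! i"
    using proper_tuple_nth[OF pr] proper_tuple_nth_Suc[OF pr, of "i - 1"] i len by auto
  ultimately have "t ! (i - 1) \<noteq> t ! Suc i"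
    using between_distinct by blast
  then have "proper_tuple (del_at i t)"
    using proper_tuple_del_at[OF pr] i len by simp
  then show ?thesis
    using t del i unfolding gens_iff deletable_def by auto
qed

lemma proper_tuple_ins_at:
  assumes pr: "proper_tuple t" and i: "1 \<le> i" "i < length t"
    and y: "y \<in> V" "y \<noteq> t ! (i - 1)" "y \<noteq> t ! i"
  shows "proper_tuple (ins_at i y t)"
proof -
  let ?u = "ins_at i y t"
  have nth_u: "?u ! j = (if j < i then t ! j else if j = i then y else t ! (j - 1))"
    if "j \<le> length t" for j
    using nth_ins_at[of i t j y] i that by simp
  have "?u ! j \<noteq> ?u ! Suc j" if j: "Suc j < length ?u" for j
  proof -
    consider "Suc j < i" | "Suc j = i" | "j = i" | "i < j" by linarith
    then show ?thesis
    proof cases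
      case 1
      then show ?thesis using i j nth_u proper_tuple_nth_Suc[OF pr, of j] by simp
    next
      case 2
      then show ?thesis using i j nth_u y by auto
    next
      case 3
      then show ?thesis using i j nth_u y by simp
    next
      case 4
      then show ?thesis using i j nth_u proper_tuple_nth_Suc[OF pr, of "j - 1"] by simp
    qed
  qed
  then show ?thesis
    using pr y set_ins_at_subset[of i y t] unfolding proper_tuple_def by blast
qed

lemma tlen_ins_at:
  assumes i: "1 \<le> i" "i < length t" and "between (t ! (i - 1)) y (t ! i)"
  shows "tlen V E (ins_at i y t) = tlen V E t"
proof -
  let ?u = "ins_at i y t"
  have "?u ! (i - 1) = t ! (i - 1)" "?u ! i = y" "?u ! Suc i = t ! i"
    using nth_ins_at[of i t _ y] i by auto
  moreover have "tlen V E (del_at i ?u) + d (?u ! (i - 1)) (?u ! i) + d (?u ! i) (?u ! Suc i)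
      = tlen V E ?u + d (?u ! (i - 1)) (?u ! Suc i)"
    using i by (intro tlen_del_at) auto
  ultimately show ?thesis
    using assms unfolding between_def by simp
qed

lemma ins_next_hop_gens:
  assumes t: "t \<in> gens V E k l" and i: "1 \<le> i" "i < length t"
    and long: "2 \<le> d (t ! (i - 1)) (t ! i)"
  shows "ins_at i (next_hop (t ! (i - 1)) (t ! i)) t \<in> gens V E (Suc k) l"
proof -
  have pr: "proper_tuple t" using t gens_iff by auto
  have "t ! (i - 1) \<in> V" "t ! i \<in> V" using proper_tuple_nth[OF pr] i by auto
  note y = next_hop_inner[OF this long]
  show ?thesis
    using t i proper_tuple_ins_at[OF pr i y(1,3,4)] tlen_ins_at[OF i y(5)]
    unfolding gens_iff by simp
qed

section \<open>Pivots\<close>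

definition pivot :: "'a list \<Rightarrow> nat \<Rightarrow> bool" where
  "pivot t j \<longleftrightarrow> 1 \<le> j \<and> j < length t \<and>
     (2 \<le> d (t ! (j - 1)) (t ! j) \<or> (Suc j < length t \<and> between (t ! (j - 1)) (t ! j) (t ! Suc j)))"

definition first_pivot :: "'a list \<Rightarrow> nat" where
  "first_pivot t = (LEAST j. pivot t j)"

definition long_pivot :: "'a list \<Rightarrow> bool" where
  "long_pivot t \<longleftrightarrow> (\<exists>j. pivot t j) \<and> 2 \<le> d (t ! (first_pivot t - 1)) (t ! first_pivot t)"

definition subdivide :: "'a list \<Rightarrow> 'a list" where
  "subdivide t = ins_at (first_pivot t) (next_hop (t ! (first_pivot t - 1)) (t ! first_pivot t)) t"

lemma first_pivot_eqI: "pivot t i \<Longrightarrow> (\<And>j. j < i \<Longrightarrow> \<not> pivot t j) \<Longrightarrow> first_pivot t = i"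
  unfolding first_pivot_def by (rule Least_equality) (auto simp: not_less[symmetric])

lemma pivot_first_pivot: "\<exists>j. pivot t j \<Longrightarrow> pivot t (first_pivot t)"
  unfolding first_pivot_def by (rule LeastI_ex)

lemma not_pivot_before_first_pivot: "j < first_pivot t \<Longrightarrow> \<not> pivot t j"
  unfolding first_pivot_def by (rule not_less_Least)

lemma pivot_exists:
  assumes t: "t \<in> gens V E k l" and "k \<noteq> l"
  shows "\<exists>j. pivot t j"
proof (rule ccontr)
  assume no_pivot: "\<not> (\<exists>j. pivot t j)"
  have len: "length t = Suc k" and pr: "proper_tuple t" using t gens_iff by auto
  have "d (t ! i) (t ! Suc i) = 1" if "i < length t - 1" for i
  proof -
    have "\<not> pivot t (Suc i)" using no_pivot by blast
    then have "d (t ! i) (t ! Suc i) < 2" using that unfolding pivot_def by auto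
    moreover have "t ! i \<noteq> t ! Suc i" using proper_tuple_nth_Suc[OF pr] that by simp
    moreover have "t ! i \<in> V" "t ! Suc i \<in> V" using proper_tuple_nth[OF pr] that by auto
    ultimately show ?thesis using gdist_eq_0_iff by fastforce
  qed
  then have "tlen V E t = k" unfolding tlen_def using len by simp
  with t \<open>k \<noteq> l\<close> show False unfolding gens_iff by simp
qed

lemma not_deletable_before_first_pivot:
  assumes "1 \<le> m" "m < first_pivot t" "first_pivot t < length t"
  shows "\<not> deletable m t"
  using assms deletable_iff_between[of m t] not_pivot_before_first_pivot[of m t]
  unfolding pivot_def by auto

lemma no_pivot_before_del_at:
  assumes pr: "proper_tuple t" and i: "first_pivot t \<le> i" "Suc i < length t"
    and del: "deletable i t" and j: "j < first_pivot t"
  shows "\<not> pivot (del_at i t) j"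
proof
  define t' where "t' = del_at i t"
  assume "pivot (del_at i t) j"
  then have piv': "pivot t' j" and j1: "1 \<le> j" unfolding t'_def pivot_def by auto
  have nth_t': "t' ! m = (if m < i then t ! m else t ! Suc m)" if "m < length t - 1" for m
    using nth_del_at[of i t m] i that unfolding t'_def by simp
  have not_piv: "\<not> pivot t j" using not_pivot_before_first_pivot j .
  have "t' ! (j - 1) = t ! (j - 1)" "t' ! j = t ! j"
    using nth_t' i j by auto
  moreover have "d (t ! (j - 1)) (t ! j) < 2" "\<not> between (t ! (j - 1)) (t ! j) (t ! Suc j)"
    using not_piv i j j1 unfolding pivot_def by auto
  ultimately have bt: "between (t ! (j - 1)) (t ! j) (t' ! Suc j)"
    using piv' unfolding pivot_def by auto
  show False
  proof (cases "Suc j < i")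
    case True
    then show False using bt nth_t' i \<open>\<not> between _ _ (t ! Suc j)\<close> by simp
  next
    case False
    then have ij: "i = Suc j" using i j by simp
    then have "between (t ! j) (t ! Suc j) (t ! Suc (Suc j))"
      using deletable_iff_between[of i t] del i by simp
    moreover have "t' ! Suc j = t ! Suc (Suc j)" using nth_t' i ij by simp
    moreover have "t ! (j - 1) \<in> V" "t ! j \<in> V" "t ! Suc j \<in> V" "t ! Suc (Suc j) \<in> V"
      using proper_tuple_nth[OF pr] i ij by auto
    ultimately have "between (t ! (j - 1)) (t ! j) (t ! Suc j)"
      using bt between_shrink_right by metis
    then show False using \<open>\<not> between _ _ (t ! Suc j)\<close> by simp
  qed
qed

lemma long_pivotD:
  assumes "long_pivot t"
  shows "1 \<le> first_pivot t" "first_pivot t < length t"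
    "2 \<le> d (t ! (first_pivot t - 1)) (t ! first_pivot t)"
  using assms pivot_first_pivot[of t] unfolding long_pivot_def pivot_def by auto

lemma subdivide_gens: "t \<in> gens V E k l \<Longrightarrow> long_pivot t \<Longrightarrow> subdivide t \<in> gens V E (Suc k) l"
  unfolding subdivide_def using ins_next_hop_gens long_pivotD by blast

lemma nth_subdivide:
  assumes "long_pivot t" "j \<le> length t"
  shows "subdivide t ! j = (if j < first_pivot t then t ! j
    else if j = first_pivot t then next_hop (t ! (first_pivot t - 1)) (t ! first_pivot t)
    else t ! (j - 1))"
  using nth_ins_at[of "first_pivot t" t j] long_pivotD(2)[OF assms(1)] assms(2)
  unfolding subdivide_def by simp

lemma not_deletable_subdivide:
  assumes pr: "proper_tuple t" and long: "long_pivot t" and m: "1 \<le> m" "m < first_pivot t"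
  shows "\<not> deletable m (subdivide t)"
proof
  let ?i0 = "first_pivot t"
  let ?a = "t ! (?i0 - 1)" and ?b = "t ! ?i0"
  note i0 = long_pivotD[OF long]
  note nth_u = nth_subdivide[OF long]
  have len_u: "length (subdivide t) = Suc (length t)"
    using i0 unfolding subdivide_def by simp
  have "subdivide t ! (m - 1) = t ! (m - 1)" "subdivide t ! m = t ! m"
    using nth_u[of "m - 1"] nth_u[of m] m i0 by auto
  moreover assume "deletable m (subdivide t)"
  ultimately have bt: "between (t ! (m - 1)) (t ! m) (subdivide t ! Suc m)"
    using deletable_iff_between[of m "subdivide t"] m i0 len_u by simp
  have not_bt: "\<not> between (t ! (m - 1)) (t ! m) (t ! Suc m)"
    using not_pivot_before_first_pivot[of m t] m i0 unfolding pivot_def by auto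
  show False
  proof (cases "Suc m < ?i0")
    case True
    then show False using bt not_bt nth_u[of "Suc m"] i0 by simp
  next
    case False
    then have m_eq: "Suc m = ?i0" using m by simp
    then have "t ! m = ?a" "subdivide t ! Suc m = next_hop ?a ?b"
      using nth_u[of ?i0] i0 by (metis diff_Suc_1, simp)
    then have "between (t ! (m - 1)) ?a (next_hop ?a ?b)" using bt by simp
    moreover have "t ! (m - 1) \<in> V" "?a \<in> V" "?b \<in> V"
      using proper_tuple_nth[OF pr] i0 m by auto
    ultimately have "between (t ! (m - 1)) ?a ?b" using between_next_hop_left i0 by blast
    then show False using not_bt m_eq by (metis diff_Suc_1)
  qed
qed

lemma deletable_Suc_subdivide:
  assumes pr: "proper_tuple t" and long: "long_pivot t" and i: "first_pivot t \<le> i" "Suc i < length t"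
  shows "deletable (Suc i) (subdivide t) \<longleftrightarrow> deletable i t"
proof -
  let ?i0 = "first_pivot t"
  let ?a = "t ! (?i0 - 1)" and ?b = "t ! ?i0"
  note i0 = long_pivotD[OF long]
  note nth_u = nth_subdivide[OF long]
  have len_u: "length (subdivide t) = Suc (length t)"
    using i0 unfolding subdivide_def by simp
  have "deletable (Suc i) (subdivide t) \<longleftrightarrow> between (subdivide t ! i) (t ! i) (t ! Suc i)"
    using deletable_iff_between[of "Suc i" "subdivide t"] i len_u nth_u[of "Suc i"]
      nth_u[of "Suc (Suc i)"] by simp
  also have "\<dots> \<longleftrightarrow> between (t ! (i - 1)) (t ! i) (t ! Suc i)"
  proof (cases "i = ?i0")
    case True
    have "?a \<in> V" "?b \<in> V" "t ! Suc ?i0 \<in> V"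
      using proper_tuple_nth[OF pr] i True i0 by auto
    then show ?thesis using between_next_hop_iff i0 True nth_u[of i] i by simp
  qed (use nth_u[of i] i in simp)
  also have "\<dots> \<longleftrightarrow> deletable i t"
    using deletable_iff_between[of i t] i i0 by simp
  finally show ?thesis .
qed

lemma subdivide_del_at:
  assumes pr: "proper_tuple t" and long: "long_pivot t"
    and i: "first_pivot t \<le> i" "Suc i < length t" and del: "deletable i t"
  shows "long_pivot (del_at i t)" "first_pivot (del_at i t) = first_pivot t"
    "subdivide (del_at i t) = del_at (Suc i) (subdivide t)"
proof -
  let ?i0 = "first_pivot t" and ?t' = "del_at i t"
  let ?a = "t ! (?i0 - 1)" and ?b = "t ! ?i0"
  note i0 = long_pivotD[OF long]
  have nth_t': "?t' ! m = (if m < i then t ! m else t ! Suc m)" if "m < length t - 1" for m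
    using nth_del_at[of i t m] i that by simp
  have "?i0 - 1 < i" "?i0 - 1 < length t - 1" using i i0 by auto
  then have a': "?t' ! (?i0 - 1) = ?a" using nth_t'[of "?i0 - 1"] by simp
  have b': "2 \<le> d ?a (?t' ! ?i0) \<and> next_hop ?a (?t' ! ?i0) = next_hop ?a ?b"
  proof (cases "?i0 < i")
    case False
    then have i_eq: "i = ?i0" using i by simp
    then have "?t' ! ?i0 = t ! Suc ?i0" using nth_t'[of ?i0] i by simp
    moreover have "between ?a ?b (t ! Suc ?i0)"
      using deletable_iff_between[of i t] del i i0 i_eq by simp
    moreover have "?a \<in> V" "?b \<in> V" "t ! Suc ?i0 \<in> V"
      using proper_tuple_nth[OF pr] i i0 i_eq by auto
    moreover have "?a \<noteq> ?b" using i0(3) \<open>?a \<in> V\<close> by auto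
    ultimately show ?thesis
      using next_hop_between_extend[of ?a ?b "t ! Suc ?i0"] i0 unfolding between_def by auto
  qed (use nth_t'[of ?i0] i i0 in simp)
  have piv': "pivot ?t' ?i0" using a' b' i i0 unfolding pivot_def by auto
  then have first': "first_pivot ?t' = ?i0"
    using first_pivot_eqI no_pivot_before_del_at[OF pr i del] by blast
  then show "long_pivot ?t'" "first_pivot ?t' = ?i0"
    using piv' a' b' unfolding long_pivot_def by auto
  have "subdivide ?t' = ins_at ?i0 (next_hop ?a ?b) ?t'"
    unfolding subdivide_def first' a' using b' by simp
  also have "\<dots> = del_at (Suc i) (subdivide t)"
    unfolding subdivide_def using del_at_Suc_ins_at[of ?i0 i t "next_hop ?a ?b"] i by simp
  finally show "subdivide ?t' = del_at (Suc i) (subdivide t)" .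
qed

lemma short_pivotD:
  assumes pr: "proper_tuple t" and ex: "\<exists>j. pivot t j" and short: "\<not> long_pivot t"
  shows "1 \<le> first_pivot t" "Suc (first_pivot t) < length t"
    "d (t ! (first_pivot t - 1)) (t ! first_pivot t) = 1"
    "between (t ! (first_pivot t - 1)) (t ! first_pivot t) (t ! Suc (first_pivot t))"
proof -
  let ?i0 = "first_pivot t"
  have "pivot t ?i0" using pivot_first_pivot[OF ex] .
  moreover have "\<not> 2 \<le> d (t ! (?i0 - 1)) (t ! ?i0)" using ex short unfolding long_pivot_def by blast
  ultimately have i0: "1 \<le> ?i0" "Suc ?i0 < length t"
    "between (t ! (?i0 - 1)) (t ! ?i0) (t ! Suc ?i0)"
    and small: "d (t ! (?i0 - 1)) (t ! ?i0) < 2"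
    unfolding pivot_def by auto
  then show "1 \<le> ?i0" "Suc ?i0 < length t" "between (t ! (?i0 - 1)) (t ! ?i0) (t ! Suc ?i0)"
    by auto
  moreover have "t ! (?i0 - 1) \<noteq> t ! ?i0"
    using proper_tuple_nth_Suc[OF pr, of "?i0 - 1"] i0 by simp
  moreover have "t ! (?i0 - 1) \<in> V" "t ! ?i0 \<in> V"
    using proper_tuple_nth[OF pr, of "?i0 - 1"] proper_tuple_nth[OF pr, of ?i0] i0 by simp_all
  ultimately have "d (t ! (?i0 - 1)) (t ! ?i0) \<noteq> 0"
    using gdist_eq_0_iff by blast
  with small show "d (t ! (?i0 - 1)) (t ! ?i0) = 1" by simp
qed

lemma subdivide_del_at_first_pivot:
  assumes pr: "proper_tuple t" and ex: "\<exists>j. pivot t j" and short: "\<not> long_pivot t"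
  shows "long_pivot (del_at (first_pivot t) t)" "first_pivot (del_at (first_pivot t) t) = first_pivot t"
    "subdivide (del_at (first_pivot t) t) = t"
proof -
  let ?i0 = "first_pivot t"
  let ?a = "t ! (?i0 - 1)" and ?b = "t ! ?i0" and ?c = "t ! Suc ?i0" and ?t' = "del_at ?i0 t"
  note i0 = short_pivotD[OF pr ex short]
  have abc: "?a \<in> V" "?b \<in> V" "?c \<in> V" using proper_tuple_nth[OF pr] i0 by auto
  have "?b \<noteq> ?c" using proper_tuple_nth_Suc[OF pr] i0 by simp
  then have "d ?b ?c \<noteq> 0" using gdist_eq_0_iff abc by simp
  then have long_ac: "2 \<le> d ?a ?c" using i0 unfolding between_def by simp
  have a': "?t' ! (?i0 - 1) = ?a" and c': "?t' ! ?i0 = ?c"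
    using nth_del_at[of ?i0 t] i0 by auto
  have del: "deletable ?i0 t" using deletable_iff_between[of ?i0 t] i0 by simp
  have "pivot ?t' ?i0" using a' c' long_ac i0 unfolding pivot_def by auto
  then have first': "first_pivot ?t' = ?i0"
    using first_pivot_eqI no_pivot_before_del_at[OF pr _ _ del] i0 by blast
  then show "long_pivot ?t'" "first_pivot ?t' = ?i0"
    using \<open>pivot ?t' ?i0\<close> a' c' long_ac unfolding long_pivot_def by auto
  have "next_hop ?a ?c = ?b"
    using next_hop_eqI abc i0 unfolding between_def by simp
  then show "subdivide ?t' = t"
    unfolding subdivide_def first' a' c' using ins_at_nth_del_at[of ?i0 t] i0 by simp
qed

lemma not_long_pivot_del_at:
  assumes pr: "proper_tuple t" and ex: "\<exists>j. pivot t j" and short: "\<not> long_pivot t"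
    and i: "first_pivot t < i" "Suc i < length t" and del: "deletable i t"
  shows "\<not> long_pivot (del_at i t)"
proof -
  let ?i0 = "first_pivot t"
  let ?a = "t ! (?i0 - 1)" and ?b = "t ! ?i0" and ?c = "t ! Suc ?i0" and ?t' = "del_at i t"
  note i0 = short_pivotD[OF pr ex short]
  have nth_t': "?t' ! m = (if m < i then t ! m else t ! Suc m)" if "m < length t - 1" for m
    using nth_del_at[of i t m] i that by simp
  have a': "?t' ! (?i0 - 1) = ?a" and b': "?t' ! ?i0 = ?b"
    using nth_t'[of "?i0 - 1"] nth_t'[of ?i0] i i0 by auto
  have "between ?a ?b (?t' ! Suc ?i0)"
  proof (cases "Suc ?i0 < i")
    case False
    then have i_eq: "i = Suc ?i0" using i by simp
    let ?e = "t ! Suc (Suc ?i0)"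
    have "between ?b ?c ?e" using deletable_iff_between[of i t] del i i_eq by simp
    moreover have "?a \<in> V" "?b \<in> V" "?c \<in> V" "?e \<in> V"
      using proper_tuple_nth[OF pr] i i_eq by auto
    moreover have "?b \<noteq> ?c" using proper_tuple_nth_Suc[OF pr] i0 by simp
    ultimately have "d ?a ?e = d ?a ?b + d ?b ?c + d ?c ?e"
      using between_concat i0(4) by blast
    moreover have "?t' ! Suc ?i0 = ?e" using nth_t'[of "Suc ?i0"] i i_eq by simp
    ultimately show ?thesis using i0(4) \<open>between ?b ?c ?e\<close> unfolding between_def by simp
  qed (use nth_t'[of "Suc ?i0"] i i0 in simp)
  then have "pivot ?t' ?i0" using a' b' i i0 unfolding pivot_def by auto
  then have "first_pivot ?t' = ?i0"
    using first_pivot_eqI no_pivot_before_del_at[OF pr _ i(2) del] i by fastforce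
  then show ?thesis using a' b' i0 unfolding long_pivot_def by simp
qed

section \<open>The contracting homotopy\<close>

definition homotopy_coeff :: "'a list \<Rightarrow> 'a list \<Rightarrow> int" where
  "homotopy_coeff t u = (if long_pivot t \<and> u = subdivide t then (-1) ^ first_pivot t else 0)"

definition bdry_coeff :: "nat \<Rightarrow> 'a list \<Rightarrow> 'a list \<Rightarrow> int" where
  "bdry_coeff k t s = (\<Sum>i\<in>{1..<k}. (-1) ^ i * (if del_at i t = s \<and> deletable i t then 1 else 0))"

definition homotopy :: "nat \<Rightarrow> nat \<Rightarrow> ('a list \<Rightarrow> int) \<Rightarrow> 'a list \<Rightarrow> int" where
  "homotopy k l c u = (\<Sum>t\<in>gens V E k l. c t * homotopy_coeff t u)"

lemma mbdry_eq: "mbdry V E k l c s = (\<Sum>t\<in>gens V E k l. c t * bdry_coeff k t s)"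
  unfolding mbdry_def bdry_coeff_def deletable_def ..

lemma sum_homotopy_coeff:
  assumes "t \<in> gens V E k l"
  shows "(\<Sum>u\<in>gens V E (Suc k) l. homotopy_coeff t u * X u)
    = (if long_pivot t then (-1) ^ first_pivot t * X (subdivide t) else 0)"
proof (cases "long_pivot t")
  case True
  have "(\<Sum>u\<in>gens V E (Suc k) l. homotopy_coeff t u * X u)
      = (\<Sum>u\<in>gens V E (Suc k) l. if u = subdivide t then (-1) ^ first_pivot t * X u else 0)"
    by (intro sum.cong) (auto simp: homotopy_coeff_def True)
  also have "\<dots> = (-1) ^ first_pivot t * X (subdivide t)"
    using finite_gens subdivide_gens[OF assms True] by simp
  finally show ?thesis using True by simp
qed (simp add: homotopy_coeff_def)

lemma sum_bdry_coeff:
  assumes t: "t \<in> gens V E k l"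
  shows "(\<Sum>r\<in>gens V E (k - 1) l. bdry_coeff k t r * Y r)
    = (\<Sum>i\<in>{1..<k}. (-1) ^ i * (if deletable i t then Y (del_at i t) else 0))"
proof -
  have "(\<Sum>r\<in>gens V E (k - 1) l. bdry_coeff k t r * Y r)
      = (\<Sum>i\<in>{1..<k}. \<Sum>r\<in>gens V E (k - 1) l.
           if del_at i t = r then (-1) ^ i * (if deletable i t then Y r else 0) else 0)"
    unfolding bdry_coeff_def sum_distrib_right by (subst sum.swap) (intro sum.cong refl, auto)
  also have "\<dots> = (\<Sum>i\<in>{1..<k}. (-1) ^ i * (if deletable i t then Y (del_at i t) else 0))"
    using finite_gens del_at_gens[OF t] by (intro sum.cong refl) auto
  finally show ?thesis .
qed

lemma homotopy_identity_long:
  assumes t: "t \<in> gens V E k l" and long: "long_pivot t"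
  shows "(\<Sum>u\<in>gens V E (Suc k) l. homotopy_coeff t u * bdry_coeff (Suc k) u s)
       + (\<Sum>r\<in>gens V E (k - 1) l. bdry_coeff k t r * homotopy_coeff r s) = (if t = s then 1 else 0)"
proof -
  let ?i0 = "first_pivot t" and ?u = "subdivide t"
  have len: "length t = Suc k" and pr: "proper_tuple t" using t gens_iff by auto
  note i0 = long_pivotD[OF long]
  define f where "f m = (-1::int) ^ m * (if del_at m ?u = s \<and> deletable m ?u then 1 else 0)" for m
  define g where "g i = (-1::int) ^ i * (if deletable i t then homotopy_coeff (del_at i t) s else 0)" for i
  have "(\<Sum>u\<in>gens V E (Suc k) l. homotopy_coeff t u * bdry_coeff (Suc k) u s)
      = (-1) ^ ?i0 * (\<Sum>m\<in>{1..<Suc k}. f m)"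
    using sum_homotopy_coeff[OF t] long unfolding bdry_coeff_def f_def by simp
  moreover have "(\<Sum>r\<in>gens V E (k - 1) l. bdry_coeff k t r * homotopy_coeff r s) = (\<Sum>i\<in>{1..<k}. g i)"
    using sum_bdry_coeff[OF t] unfolding g_def .
  moreover have "(-1) ^ ?i0 * (\<Sum>m\<in>{1..<Suc k}. f m) + (\<Sum>i\<in>{1..<k}. g i) = (-1) ^ ?i0 * f ?i0"
  proof (rule sum_shift_cancel)
    show "1 \<le> ?i0" "?i0 \<le> k" using i0 len by auto
    show "f m = 0 \<and> g m = 0" if "1 \<le> m" "m < ?i0" for m
      using not_deletable_subdivide[OF pr long that] not_deletable_before_first_pivot[OF that] i0
      unfolding f_def g_def by simp
    \<comment> \<open>deleting entry i+1 of the subdivision is subdividing after deleting entry i\<close>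
    show "(-1) ^ ?i0 * f (Suc i) + g i = 0" if i: "?i0 \<le> i" "i < k" for i
    proof (cases "deletable i t")
      case True
      then show ?thesis
        using subdivide_del_at[OF pr long i(1) _ True] deletable_Suc_subdivide[OF pr long i(1)] i len
        unfolding f_def g_def homotopy_coeff_def by (auto simp: eq_commute[of s])
    qed (use deletable_Suc_subdivide[OF pr long i(1)] i len in \<open>simp add: f_def g_def\<close>)
  qed
  moreover have "(-1) ^ ?i0 * f ?i0 = (if t = s then 1 else 0)"
  proof -
    have del_u: "del_at ?i0 ?u = t" using i0 unfolding subdivide_def by simp
    moreover have "deletable ?i0 ?u"
      using del_u subdivide_gens[OF t long] t unfolding deletable_def gens_iff by simp
    ultimately show ?thesis unfolding f_def by (simp flip: power_add)
  qed
  ultimately show ?thesis by simp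
qed

lemma homotopy_identity_short:
  assumes t: "t \<in> gens V E k l" and ex: "\<exists>j. pivot t j" and short: "\<not> long_pivot t"
  shows "(\<Sum>u\<in>gens V E (Suc k) l. homotopy_coeff t u * bdry_coeff (Suc k) u s)
       + (\<Sum>r\<in>gens V E (k - 1) l. bdry_coeff k t r * homotopy_coeff r s) = (if t = s then 1 else 0)"
proof -
  let ?i0 = "first_pivot t"
  have len: "length t = Suc k" and pr: "proper_tuple t" using t gens_iff by auto
  note i0 = short_pivotD[OF pr ex short]
  define g where "g i = (-1::int) ^ i * (if deletable i t then homotopy_coeff (del_at i t) s else 0)" for i
  have "(\<Sum>u\<in>gens V E (Suc k) l. homotopy_coeff t u * bdry_coeff (Suc k) u s) = 0"
    using sum_homotopy_coeff[OF t] short by simp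
  moreover have "(\<Sum>r\<in>gens V E (k - 1) l. bdry_coeff k t r * homotopy_coeff r s) = (\<Sum>i\<in>{1..<k}. g i)"
    using sum_bdry_coeff[OF t] unfolding g_def .
  moreover have "g i = 0" if "i \<in> {1..<k}" "i \<noteq> ?i0" for i
  proof (cases "i < ?i0")
    case True
    then show ?thesis
      using not_deletable_before_first_pivot[of i t] that i0 unfolding g_def by simp
  next
    case False
    then show ?thesis
      using not_long_pivot_del_at[OF pr ex short, of i] that len unfolding g_def homotopy_coeff_def by auto
  qed
  then have "(\<Sum>i\<in>{1..<k}. g i) = g ?i0"
    using sum.remove[of "{1..<k}" ?i0 g] i0 len by simp
  moreover have "g ?i0 = (if t = s then 1 else 0)"
    using subdivide_del_at_first_pivot[OF pr ex short] deletable_iff_between[of ?i0 t] i0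
    unfolding g_def homotopy_coeff_def by (auto simp flip: power_add)
  ultimately show ?thesis by simp
qed

lemma homotopy_identity:
  assumes "t \<in> gens V E k l" "k \<noteq> l"
  shows "(\<Sum>u\<in>gens V E (Suc k) l. homotopy_coeff t u * bdry_coeff (Suc k) u s)
       + (\<Sum>r\<in>gens V E (k - 1) l. bdry_coeff k t r * homotopy_coeff r s) = (if t = s then 1 else 0)"
proof (cases "long_pivot t")
  case True
  then show ?thesis using homotopy_identity_long assms(1) by blast
next
  case False
  then show ?thesis using homotopy_identity_short pivot_exists assms by blast
qed

lemma mchain_homotopy: "mchain V E (Suc k) l (homotopy k l c)"
  unfolding mchain_def
proof (intro allI impI)
  fix u assume "homotopy k l c u \<noteq> 0"
  then obtain t where "t \<in> gens V E k l" "c t * homotopy_coeff t u \<noteq> 0"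
    unfolding homotopy_def by (rule sum.not_neutral_contains_not_neutral)
  then show "u \<in> gens V E (Suc k) l"
    using subdivide_gens unfolding homotopy_coeff_def by (auto split: if_splits)
qed

lemma mbdry_homotopy:
  assumes "k \<noteq> l" and c: "mchain V E k l c" and cycle: "mbdry V E k l c = (\<lambda>_. 0)"
  shows "mbdry V E (Suc k) l (homotopy k l c) = c"
proof
  fix s
  have "mbdry V E (Suc k) l (homotopy k l c) s
      = (\<Sum>t\<in>gens V E k l. c t * (\<Sum>u\<in>gens V E (Suc k) l. homotopy_coeff t u * bdry_coeff (Suc k) u s))"
    unfolding mbdry_eq homotopy_def sum_distrib_right sum_distrib_left
    by (subst sum.swap) (simp add: mult.assoc)
  also have "\<dots> = (\<Sum>t\<in>gens V E k l. c t * ((if t = s then 1 else 0)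
      - (\<Sum>r\<in>gens V E (k - 1) l. bdry_coeff k t r * homotopy_coeff r s)))"
    using homotopy_identity[OF _ assms(1)] by (intro sum.cong refl) (simp add: eq_diff_eq)
  also have "\<dots> = (\<Sum>t\<in>gens V E k l. c t * (if t = s then 1 else 0))
      - (\<Sum>r\<in>gens V E (k - 1) l. (\<Sum>t\<in>gens V E k l. c t * bdry_coeff k t r) * homotopy_coeff r s)"
    by (simp add: right_diff_distrib sum_subtractf sum_distrib_left sum_distrib_right mult.assoc
        sum.swap[of _ "gens V E k l"])
  also have "(\<Sum>r\<in>gens V E (k - 1) l. (\<Sum>t\<in>gens V E k l. c t * bdry_coeff k t r) * homotopy_coeff r s) = 0"
    using cycle unfolding fun_eq_iff mbdry_eq by simp
  also have "(\<Sum>t\<in>gens V E k l. c t * (if t = s then 1 else 0)) = c s"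
    using finite_gens c unfolding mchain_def by (simp add: if_distrib cong: if_cong) blast
  finally show "mbdry V E (Suc k) l (homotopy k l c) s = c s" by simp
qed

lemma MH_zero_off_diagonal: "k \<noteq> l \<Longrightarrow> MH_zero V E k l"
  unfolding MH_zero_def using mchain_homotopy mbdry_homotopy by blast

end

theorem theoremB3:
  fixes V :: "'a set" and E :: "'a \<Rightarrow> 'a \<Rightarrow> bool"
  assumes "finite V" and "simple_graph V E" and "connected_graph V E"
    and "geodetic V E" and "ptolemaic V E"
  shows "diagonal V E"
proof -
  interpret geodetic_ptolemaic_graph V E
    using assms by unfold_locales
  show ?thesis
    unfolding diagonal_def using MH_zero_off_diagonal by blast
qed

end
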